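(* Let $n\ge 2$, let $\Omega$ be a compact subset of $\mathbb{R}^n$, let $v\in S^{n-1}$ and $b\in\mathbb{R}$. Then $b\ge l_{\Omega}(v)$ if and only if for every $x\in \Omega^+_{v,b}$ the closed line segment $\overline{xx'}$ joining $x$ and $x'=\mathrm{R}_{v,b}(x)$ is contained in $\Omega$.
   Context: $S^{n-1}$ is the unit sphere in $\mathbb{R}^n$. For $X\subset\mathbb{R}^n$, $v\in S^{n-1}$ and $b\in\mathbb{R}$, put $X^+_{v,b}=X\cap\{x\in\mathbb{R}^n : x\cdot v>b\}$, and let $\mathrm{R}_{v,b}$ be the reflection of $\mathbb{R}^n$ in the hyperplane $\{x : x\cdot v=b\}$. For a bounded $X\subset\mathbb{R}^n$, the level of the maximal cap in direction $v$ is $l_X(v)=\inf\{a : \mathrm{R}_{v,c}(X^+_{v,c})\subset X \text{ for every } c\ge a\}$. For $x,y\in\mathbb{R}^n$, $\overline{xy}$ denotes the closed line segment joining $x$ and $y$. *)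

theory Defs
  imports "HOL-Analysis.Analysis" "HOL-Library.Extended_Real"
begin

definition cap_plus :: "(real^'n) set \<Rightarrow> real^'n \<Rightarrow> real \<Rightarrow> (real^'n) set" where
  "cap_plus X v b = X \<inter> {x. x \<bullet> v > b}"

definition refl_hyp :: "real^'n \<Rightarrow> real \<Rightarrow> real^'n \<Rightarrow> real^'n" where
  "refl_hyp v b x = x - (2 * (x \<bullet> v - b)) *\<^sub>R v"

text \<open>Level of the maximal cap, as an extended real (the infimum of the empty-constraint
  case, e.g. X empty, is -\<infinity>).\<close>
definition max_cap_level :: "(real^'n) set \<Rightarrow> real^'n \<Rightarrow> ereal" where
  "max_cap_level X v =
     Inf (ereal ` {a. \<forall>c\<ge>a. refl_hyp v c ` cap_plus X v c \<subseteq> X})"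

end

theory Submission
  imports Defs
begin

text \<open>For a point x above the hyperplane at level b, the segment from x to its mirror image
  is swept out by the reflections of x in the parallel hyperplanes at levels c between b and
  x \<bullet> v. Hence all caps above level b reflect into \<Omega> exactly when these segments lie in \<Omega>,
  the endpoint c = b being supplied by closedness.\<close>

lemma refl_hyp_interpolate:
  "(1 - u) *\<^sub>R x + u *\<^sub>R refl_hyp v b x = refl_hyp v (x \<bullet> v - u * (x \<bullet> v - b)) x"
  by (simp add: refl_hyp_def algebra_simps)

lemma closed_segment_refl_hyp:
  assumes "b \<le> x \<bullet> v"
  shows "closed_segment x (refl_hyp v b x) = (\<lambda>c. refl_hyp v c x) ` {b .. x \<bullet> v}"
proof -
  have "(\<lambda>u. x \<bullet> v - u * (x \<bullet> v - b)) ` {0..1} = {b .. x \<bullet> v}"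
    using image_affinity_atLeastAtMost [of "- (x \<bullet> v - b)" "x \<bullet> v" 0 1] assms
    by (simp add: algebra_simps)
  moreover have "closed_segment x (refl_hyp v b x) =
      (\<lambda>c. refl_hyp v c x) ` (\<lambda>u. x \<bullet> v - u * (x \<bullet> v - b)) ` {0..1}"
    unfolding closed_segment_image_interval refl_hyp_interpolate image_image ..
  ultimately show ?thesis by simp
qed

lemma max_cap_level_le_iff:
  "max_cap_level X v \<le> ereal b \<longleftrightarrow> (\<forall>c>b. refl_hyp v c ` cap_plus X v c \<subseteq> X)"
  (is "_ \<longleftrightarrow> (\<forall>c>b. ?reflects c)")
proof
  assume "max_cap_level X v \<le> ereal b"
  show "\<forall>c>b. ?reflects c"
  proof (intro allI impI)
    fix c assume "b < c"
    with \<open>max_cap_level X v \<le> ereal b\<close> have "max_cap_level X v < ereal c"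
      by (simp add: order_le_less_trans)
    then obtain a where "\<forall>c'\<ge>a. ?reflects c'" "a < c"
      by (auto simp: max_cap_level_def Inf_less_iff)
    then show "?reflects c" by simp
  qed
next
  assume above: "\<forall>c>b. ?reflects c"
  show "max_cap_level X v \<le> ereal b"
  proof (rule ccontr)
    assume "\<not> max_cap_level X v \<le> ereal b"
    then have "ereal b < max_cap_level X v" by (simp add: not_le)
    then obtain c where "ereal b < ereal c" "ereal c < max_cap_level X v"
      by (blast dest: ereal_dense2)
    moreover have "max_cap_level X v \<le> ereal c"
      unfolding max_cap_level_def using above calculation(1) by (intro Inf_lower) auto
    ultimately show False by simp
  qed
qed

lemma reflected_caps_above_iff_segments:
  assumes "closed X"
  shows "(\<forall>c>b. refl_hyp v c ` cap_plus X v c \<subseteq> X) \<longleftrightarrow>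
         (\<forall>x \<in> cap_plus X v b. closed_segment x (refl_hyp v b x) \<subseteq> X)"
proof
  assume above: "\<forall>c>b. refl_hyp v c ` cap_plus X v c \<subseteq> X"
  show "\<forall>x \<in> cap_plus X v b. closed_segment x (refl_hyp v b x) \<subseteq> X"
  proof
    fix x assume "x \<in> cap_plus X v b"
    then have "x \<in> X" "b < x \<bullet> v" by (auto simp: cap_plus_def)
    have "(\<lambda>c. refl_hyp v c x) ` {b <..< x \<bullet> v} \<subseteq> X"
      using above \<open>x \<in> X\<close> by (fastforce simp: cap_plus_def)
    then have "(\<lambda>c. refl_hyp v c x) ` closure {b <..< x \<bullet> v} \<subseteq> X"
      using \<open>closed X\<close> by (intro image_closure_subset) (auto simp: refl_hyp_def intro!: continuous_intros)
    then show "closed_segment x (refl_hyp v b x) \<subseteq> X"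
      using \<open>b < x \<bullet> v\<close> by (simp add: closed_segment_refl_hyp)
  qed
next
  assume segments: "\<forall>x \<in> cap_plus X v b. closed_segment x (refl_hyp v b x) \<subseteq> X"
  show "\<forall>c>b. refl_hyp v c ` cap_plus X v c \<subseteq> X"
  proof (intro allI impI image_subsetI)
    fix c x assume "b < c" "x \<in> cap_plus X v c"
    then have "x \<in> cap_plus X v b" "c \<in> {b .. x \<bullet> v}" by (auto simp: cap_plus_def)
    then have "refl_hyp v c x \<in> closed_segment x (refl_hyp v b x)"
      by (simp add: closed_segment_refl_hyp)
    with segments \<open>x \<in> cap_plus X v b\<close> show "refl_hyp v c x \<in> X" by blast
  qed
qed

theorem lemma2p1:
  fixes \<Omega> :: "(real^'n) set" and v :: "real^'n" and b :: real
  assumes "CARD('n) \<ge> 2"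
    and "compact \<Omega>"
    and "v \<in> sphere 0 1"
  shows "ereal b \<ge> max_cap_level \<Omega> v \<longleftrightarrow>
         (\<forall>x \<in> cap_plus \<Omega> v b. closed_segment x (refl_hyp v b x) \<subseteq> \<Omega>)"
proof -
  have "closed \<Omega>" using \<open>compact \<Omega>\<close> by (rule compact_imp_closed)
  then show ?thesis by (simp only: max_cap_level_le_iff reflected_caps_above_iff_segments)
qed

end
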